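(* Let $n \geq 4$, let $A$ be an $n \times n$ real matrix with $\mathrm{Tr}(AA^t) = n$, and let $O$ be distributed according to Haar measure on $O(n,\mathbb{R})$. Then $\mathrm{Var}[p_2(AO)] \leq 2$, where $p_2(AO) = \mathrm{Tr}((AO)^2)$. *)

theory Defs
  imports "HOL-Probability.Probability"
begin

definition orthogonal_group :: "(real^'n^'n) set" where
  "orthogonal_group = {Q. orthogonal_matrix Q}"

text \<open>M is (normalised) Haar measure on O(n,R): a Borel probability measure on the
space of n x n real matrices, concentrated on O(n,R), and invariant under left and right
multiplication by orthogonal matrices. (Such a measure exists and is unique.)\<close>
definition haar_orthogonal :: "(real^'n^'n) measure \<Rightarrow> bool" where
  "haar_orthogonal M \<longleftrightarrow>
     prob_space M \<and> sets M = sets borel \<and> emeasure M orthogonal_group = 1 \<and>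
     (\<forall>Q. orthogonal_matrix Q \<longrightarrow>
        distr M borel (\<lambda>U. Q ** U) = M \<and> distr M borel (\<lambda>U. U ** Q) = M)"

definition p2 :: "real^'n^'n \<Rightarrow> real" where
  "p2 B = trace (B ** B)"

end

theory Submission
  imports Defs
begin

(* Write p2(AO) = sum A_ij A_kl O_jk O_li. The mean and the second moment of p2(AO) are then
   linear in the second and fourth moments of the entries of O. Invariance of Haar measure under
   sign changes, coordinate permutations and a rotation by pi/4 in a coordinate plane, together
   with the orthonormality of rows and columns, determines all these moments; this is the
   degree-four Weingarten formula for O(n). Summing it against A gives
     Var p2(AO) = (3 (n+1) |A|^4 - 6 |A A^t|^2) / (n (n-1) (n+2)) - |A|^4 / n^2
   (Frobenius norms), and with |A|^2 = tr (A A^t) = n and Cauchy-Schwarz,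
   |A A^t|^2 >= (tr (A A^t))^2 / n = n, this is at most 2. *)

section \<open>Orthogonal matrices\<close>

lemma orthogonal_matrix_rows_orthonormal:
  assumes "orthogonal_matrix (U::real^'n^'n)"
  shows "(\<Sum>k\<in>UNIV. U$i$k * U$j$k) = (if i = j then 1 else 0)"
proof -
  have "(U ** transpose U)$i$j = mat 1 $i$j"
    using assms by (simp add: orthogonal_matrix_def)
  then show ?thesis by (simp add: matrix_matrix_mult_def transpose_def mat_def)
qed

lemma orthogonal_matrix_cols_orthonormal:
  assumes "orthogonal_matrix (U::real^'n^'n)"
  shows "(\<Sum>k\<in>UNIV. U$k$i * U$k$j) = (if i = j then 1 else 0)"
proof -
  have "(transpose U ** U)$i$j = mat 1 $i$j"
    using assms by (simp add: orthogonal_matrix_def)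
  then show ?thesis by (simp add: matrix_matrix_mult_def transpose_def mat_def)
qed

lemma orthogonal_matrix_entry_abs_le_1:
  assumes "orthogonal_matrix (U::real^'n^'n)"
  shows "\<bar>U$i$j\<bar> \<le> 1"
proof -
  have "U$i$j * U$i$j \<le> (\<Sum>k\<in>UNIV. U$i$k * U$i$k)"
    by (rule member_le_sum) auto
  also have "\<dots> = 1"
    using orthogonal_matrix_rows_orthonormal[OF assms, of i i] by simp
  finally have "\<bar>U$i$j\<bar>\<^sup>2 \<le> 1\<^sup>2" by (simp add: power2_eq_square)
  then show ?thesis by (rule power2_le_imp_le) simp
qed

definition flip_sign :: "'a \<Rightarrow> 'a \<Rightarrow> real" where
  "flip_sign r i = (if i = r then -1 else 1)"

definition sign_flip_matrix :: "'n::finite \<Rightarrow> real^'n^'n" where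
  "sign_flip_matrix r = (\<chi> i k. if i = k then flip_sign r i else 0)"

lemma sign_flip_matrix_mult_nth: "(sign_flip_matrix r ** U) $ i $ j = flip_sign r i * U$i$j"
  by (simp add: sign_flip_matrix_def matrix_matrix_mult_def if_distrib[where f="\<lambda>x. x * _"]
      cong: if_cong)

lemma mult_sign_flip_matrix_nth: "(U ** sign_flip_matrix r) $ i $ j = flip_sign r j * U$i$j"
  by (simp add: sign_flip_matrix_def matrix_matrix_mult_def if_distrib[where f="\<lambda>x. _ * x"]
      mult.commute cong: if_cong)

lemma orthogonal_matrix_sign_flip_matrix: "orthogonal_matrix (sign_flip_matrix r)"
proof -
  have "transpose (sign_flip_matrix r) = sign_flip_matrix r"
    by (simp add: vec_eq_iff sign_flip_matrix_def transpose_def)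
  moreover have "sign_flip_matrix r ** sign_flip_matrix r = mat 1"
    by (simp add: vec_eq_iff sign_flip_matrix_mult_nth mat_def)
      (simp add: sign_flip_matrix_def flip_sign_def)
  ultimately show ?thesis by (simp add: orthogonal_matrix)
qed

definition perm_matrix :: "('n::finite \<Rightarrow> 'n) \<Rightarrow> real^'n^'n" where
  "perm_matrix \<sigma> = (\<chi> i k. if \<sigma> i = k then 1 else 0)"

lemma perm_matrix_mult_nth: "(perm_matrix \<sigma> ** U) $ i $ j = U $ \<sigma> i $ j"
  by (simp add: perm_matrix_def matrix_matrix_mult_def if_distrib[where f="\<lambda>x. x * _"]
      cong: if_cong)

lemma mult_transpose_perm_matrix_nth: "(U ** transpose (perm_matrix \<sigma>)) $ i $ j = U $ i $ \<sigma> j"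
  by (simp add: perm_matrix_def transpose_def matrix_matrix_mult_def
      if_distrib[where f="\<lambda>x. _ * x"] cong: if_cong)

lemma orthogonal_matrix_perm_matrix:
  assumes "\<sigma> permutes UNIV"
  shows "orthogonal_matrix (perm_matrix \<sigma>)"
proof -
  have "\<sigma> i = \<sigma> j \<longleftrightarrow> i = j" for i j
    using assms by (metis permutes_inj injD)
  then have "perm_matrix \<sigma> ** transpose (perm_matrix \<sigma>) = mat 1"
    by (simp add: vec_eq_iff perm_matrix_mult_nth mat_def) (simp add: perm_matrix_def transpose_def)
  then show ?thesis by (simp add: orthogonal_matrix_def matrix_left_right_inverse)
qed

lemma sum_two_points:
  fixes a b :: real
  assumes "r \<noteq> s"
  shows "(\<Sum>k\<in>UNIV. (if k = r then a else if k = s then b else 0) * f k) = a * f r + b * f (s::'n::finite)"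
proof -
  have "(\<Sum>k\<in>UNIV. (if k = r then a else if k = s then b else 0) * f k)
      = (\<Sum>k\<in>UNIV. (if k = r then a * f r else 0) + (if k = s then b * f s else 0))"
    using assms by (intro sum.cong) auto
  also have "\<dots> = a * f r + b * f s" by (simp add: sum.distrib)
  finally show ?thesis .
qed

definition plane_rotation :: "real \<Rightarrow> 'n::finite \<Rightarrow> 'n \<Rightarrow> real^'n^'n" where
  "plane_rotation \<theta> r s = (\<chi> i k.
     if i = r then (if k = r then cos \<theta> else if k = s then sin \<theta> else 0)
     else if i = s then (if k = r then - sin \<theta> else if k = s then cos \<theta> else 0)
     else if i = k then 1 else 0)"

lemma plane_rotation_mult_nth:
  assumes "r \<noteq> s"
  shows "(plane_rotation \<theta> r s ** U) $ i $ j =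
    (if i = r then cos \<theta> * U$r$j + sin \<theta> * U$s$j
     else if i = s then cos \<theta> * U$s$j - sin \<theta> * U$r$j else U$i$j)"
  using sum_two_points[OF assms, of "cos \<theta>" "sin \<theta>" "\<lambda>k. U$k$j"]
    sum_two_points[OF assms, of "- sin \<theta>" "cos \<theta>" "\<lambda>k. U$k$j"]
  by (simp add: matrix_matrix_mult_def plane_rotation_def if_distrib[where f="\<lambda>x. x * _"]
      cong: if_cong)

lemma orthogonal_matrix_plane_rotation:
  assumes "r \<noteq> s"
  shows "orthogonal_matrix (plane_rotation \<theta> r s)"
proof -
  have "plane_rotation \<theta> r s ** transpose (plane_rotation \<theta> r s) = mat 1"
    using assms sin_cos_squared_add[of \<theta>]
    by (simp add: vec_eq_iff plane_rotation_mult_nth mat_def)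
      (auto simp: plane_rotation_def transpose_def algebra_simps power2_eq_square)
  then show ?thesis by (simp add: orthogonal_matrix_def matrix_left_right_inverse)
qed

section \<open>Pairings and the orthogonal Weingarten function\<close>

definition pairing :: "nat \<Rightarrow> 'a \<Rightarrow> 'a \<Rightarrow> 'a \<Rightarrow> 'a \<Rightarrow> real" where
  "pairing p a1 a2 a3 a4 =
     (if p = 0 then of_bool (a1 = a2) * of_bool (a3 = a4)
      else if p = 1 then of_bool (a1 = a3) * of_bool (a2 = a4)
      else of_bool (a1 = a4) * of_bool (a2 = a3))"

definition weingarten_coeff :: "real \<Rightarrow> nat \<Rightarrow> nat \<Rightarrow> real" where
  "weingarten_coeff n p q = (if p = q then n + 1 else -1) / (n * (n - 1) * (n + 2))"

definition weingarten4 :: "real \<Rightarrow> 'a \<Rightarrow> 'a \<Rightarrow> 'a \<Rightarrow> 'a \<Rightarrow> 'b \<Rightarrow> 'b \<Rightarrow> 'b \<Rightarrow> 'b \<Rightarrow> real" where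
  "weingarten4 n a1 a2 a3 a4 b1 b2 b3 b4 =
     (\<Sum>p<3. \<Sum>q<3. weingarten_coeff n p q * pairing p a1 a2 a3 a4 * pairing q b1 b2 b3 b4)"

lemmas weingarten4_unfold = weingarten4_def pairing_def weingarten_coeff_def numeral_3_eq_3

lemma weingarten4_swap23: "weingarten4 n a1 a3 a2 a4 b1 b3 b2 b4 = weingarten4 n a1 a2 a3 a4 b1 b2 b3 b4"
  by (simp add: weingarten4_unfold eq_commute algebra_simps)

lemma weingarten4_swap34: "weingarten4 n a1 a2 a4 a3 b1 b2 b4 b3 = weingarten4 n a1 a2 a3 a4 b1 b2 b3 b4"
  by (simp add: weingarten4_unfold eq_commute algebra_simps)

lemma pairing_odd_eq_0:
  assumes "flip_sign r a1 * flip_sign r a2 * flip_sign r a3 * flip_sign r a4 = -1"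
  shows "pairing p a1 a2 a3 a4 = 0"
  using assms by (auto simp: pairing_def flip_sign_def split: if_splits)

lemma weingarten4_odd_rows_eq_0:
  "flip_sign r a1 * flip_sign r a2 * flip_sign r a3 * flip_sign r a4 = -1 \<Longrightarrow>
    weingarten4 n a1 a2 a3 a4 b1 b2 b3 b4 = 0"
  by (simp add: weingarten4_def pairing_odd_eq_0)

lemma weingarten4_odd_cols_eq_0:
  "flip_sign r b1 * flip_sign r b2 * flip_sign r b3 * flip_sign r b4 = -1 \<Longrightarrow>
    weingarten4 n a1 a2 a3 a4 b1 b2 b3 b4 = 0"
  by (simp add: weingarten4_def pairing_odd_eq_0)

(* The sign product is -1 iff r occurs an odd number of times among a1, ..., a4. *)
lemma index_quadruple_cases:
  obtains r where "flip_sign r a1 * flip_sign r a2 * flip_sign r a3 * flip_sign r a4 = -1"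
  | "a2 = a1" "a4 = a3" | "a3 = a1" "a4 = a2" | "a4 = a1" "a3 = a2"
proof -
  have "flip_sign a1 a1 * flip_sign a1 a2 * flip_sign a1 a3 * flip_sign a1 a4 = -1 \<or>
    flip_sign a2 a1 * flip_sign a2 a2 * flip_sign a2 a3 * flip_sign a2 a4 = -1 \<or>
    flip_sign a3 a1 * flip_sign a3 a2 * flip_sign a3 a3 * flip_sign a3 a4 = -1 \<or>
    (a2 = a1 \<and> a4 = a3) \<or> (a3 = a1 \<and> a4 = a2) \<or> (a4 = a1 \<and> a3 = a2)"
    by (auto simp: flip_sign_def)
  then show ?thesis using that by blast
qed

section \<open>Entry moments of Haar orthogonal matrices\<close>

lemma borel_measurable_entry[measurable]: "(\<lambda>U::real^'n^'n. U$i$j) \<in> borel_measurable borel"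
  by (intro borel_measurable_continuous_onI continuous_intros)

locale haar_measure =
  fixes M :: "(real^'n^'n) measure"
  assumes haar: "haar_orthogonal M"
begin

sublocale prob_space M
  using haar by (simp add: haar_orthogonal_def)

lemma sets_M: "sets M = sets borel"
  using haar by (simp add: haar_orthogonal_def)

lemma borel_measurable_M: "h \<in> borel_measurable borel \<Longrightarrow> h \<in> borel_measurable M"
  by (subst measurable_cong_sets[OF sets_M refl])

lemma AE_orthogonal_matrix: "AE U in M. orthogonal_matrix U"
proof -
  have "emeasure M orthogonal_group = 1"
    using haar by (simp add: haar_orthogonal_def)
  moreover from this have "orthogonal_group \<in> sets M"
    using emeasure_notin_sets by fastforce
  ultimately have "AE U in M. U \<in> orthogonal_group"
    by (subst AE_in_set_eq_1) (auto simp: emeasure_eq_measure)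
  then show ?thesis by (simp add: orthogonal_group_def)
qed

lemma integral_mult_left_invariant:
  fixes h :: "real^'n^'n \<Rightarrow> real"
  assumes "orthogonal_matrix Q" and h: "h \<in> borel_measurable borel"
  shows "(\<integral>U. h (Q ** U) \<partial>M) = (\<integral>U. h U \<partial>M)"
proof -
  have "(\<lambda>U. Q ** U) \<in> M \<rightarrow>\<^sub>M borel"
    by (intro borel_measurable_M borel_measurable_continuous_onI)
      (simp only: matrix_matrix_mult_def, intro continuous_intros)
  then have "(\<integral>U. h U \<partial>distr M borel (\<lambda>U. Q ** U)) = (\<integral>U. h (Q ** U) \<partial>M)"
    using h by (rule integral_distr)
  moreover have "distr M borel (\<lambda>U. Q ** U) = M"
    using haar assms(1) by (simp add: haar_orthogonal_def)
  ultimately show ?thesis by simp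
qed

lemma integral_mult_right_invariant:
  fixes h :: "real^'n^'n \<Rightarrow> real"
  assumes "orthogonal_matrix Q" and h: "h \<in> borel_measurable borel"
  shows "(\<integral>U. h (U ** Q) \<partial>M) = (\<integral>U. h U \<partial>M)"
proof -
  have "(\<lambda>U. U ** Q) \<in> M \<rightarrow>\<^sub>M borel"
    by (intro borel_measurable_M borel_measurable_continuous_onI)
      (simp only: matrix_matrix_mult_def, intro continuous_intros)
  then have "(\<integral>U. h U \<partial>distr M borel (\<lambda>U. U ** Q)) = (\<integral>U. h (U ** Q) \<partial>M)"
    using h by (rule integral_distr)
  moreover have "distr M borel (\<lambda>U. U ** Q) = M"
    using haar assms(1) by (simp add: haar_orthogonal_def)
  ultimately show ?thesis by simp
qed

lemma integrable_entry_product2: "integrable M (\<lambda>U. U$a1$b1 * U$a2$b2)"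
proof (rule integrable_const_bound[where B=1])
  show "AE U in M. norm (U$a1$b1 * U$a2$b2) \<le> 1"
    using AE_orthogonal_matrix
    by eventually_elim (simp add: abs_mult mult_le_one orthogonal_matrix_entry_abs_le_1)
qed (intro borel_measurable_M; measurable)

lemma integrable_entry_product4: "integrable M (\<lambda>U. U$a1$b1 * U$a2$b2 * U$a3$b3 * U$a4$b4)"
proof (rule integrable_const_bound[where B=1])
  show "AE U in M. norm (U$a1$b1 * U$a2$b2 * U$a3$b3 * U$a4$b4) \<le> 1"
    using AE_orthogonal_matrix
    by eventually_elim (simp add: abs_mult mult_le_one orthogonal_matrix_entry_abs_le_1)
qed (intro borel_measurable_M; measurable)

definition moment2 :: "'n \<Rightarrow> 'n \<Rightarrow> 'n \<Rightarrow> 'n \<Rightarrow> real" where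
  "moment2 a1 a2 b1 b2 = (\<integral>U. U$a1$b1 * U$a2$b2 \<partial>M)"

definition moment4 :: "'n \<Rightarrow> 'n \<Rightarrow> 'n \<Rightarrow> 'n \<Rightarrow> 'n \<Rightarrow> 'n \<Rightarrow> 'n \<Rightarrow> 'n \<Rightarrow> real" where
  "moment4 a1 a2 a3 a4 b1 b2 b3 b4 = (\<integral>U. U$a1$b1 * U$a2$b2 * U$a3$b3 * U$a4$b4 \<partial>M)"

lemma moment4_swap23: "moment4 a1 a3 a2 a4 b1 b3 b2 b4 = moment4 a1 a2 a3 a4 b1 b2 b3 b4"
  by (simp add: moment4_def mult_ac)

lemma moment4_swap34: "moment4 a1 a2 a4 a3 b1 b2 b4 b3 = moment4 a1 a2 a3 a4 b1 b2 b3 b4"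
  by (simp add: moment4_def mult_ac)

lemma moment2_odd_rows_eq_0:
  assumes "flip_sign r a1 * flip_sign r a2 = -1"
  shows "moment2 a1 a2 b1 b2 = 0"
proof -
  have "moment2 a1 a2 b1 b2 = (\<integral>U. (sign_flip_matrix r ** U)$a1$b1 * (sign_flip_matrix r ** U)$a2$b2 \<partial>M)"
    unfolding moment2_def
    by (rule integral_mult_left_invariant[symmetric, OF orthogonal_matrix_sign_flip_matrix]) measurable
  also have "\<dots> = (flip_sign r a1 * flip_sign r a2) * moment2 a1 a2 b1 b2"
    by (simp add: sign_flip_matrix_mult_nth moment2_def mult_ac)
  finally show ?thesis using assms by simp
qed

lemma moment2_odd_cols_eq_0:
  assumes "flip_sign r b1 * flip_sign r b2 = -1"
  shows "moment2 a1 a2 b1 b2 = 0"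
proof -
  have "moment2 a1 a2 b1 b2 = (\<integral>U. (U ** sign_flip_matrix r)$a1$b1 * (U ** sign_flip_matrix r)$a2$b2 \<partial>M)"
    unfolding moment2_def
    by (rule integral_mult_right_invariant[symmetric, OF orthogonal_matrix_sign_flip_matrix]) measurable
  also have "\<dots> = (flip_sign r b1 * flip_sign r b2) * moment2 a1 a2 b1 b2"
    by (simp add: mult_sign_flip_matrix_nth moment2_def mult_ac)
  finally show ?thesis using assms by simp
qed

lemma moment4_odd_rows_eq_0:
  assumes "flip_sign r a1 * flip_sign r a2 * flip_sign r a3 * flip_sign r a4 = -1"
  shows "moment4 a1 a2 a3 a4 b1 b2 b3 b4 = 0"
proof -
  let ?V = "\<lambda>U. sign_flip_matrix r ** U"
  have "moment4 a1 a2 a3 a4 b1 b2 b3 b4 =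
      (\<integral>U. ?V U$a1$b1 * ?V U$a2$b2 * ?V U$a3$b3 * ?V U$a4$b4 \<partial>M)"
    unfolding moment4_def
    by (rule integral_mult_left_invariant[symmetric, OF orthogonal_matrix_sign_flip_matrix]) measurable
  also have "\<dots> = (flip_sign r a1 * flip_sign r a2 * flip_sign r a3 * flip_sign r a4)
      * moment4 a1 a2 a3 a4 b1 b2 b3 b4"
    by (simp add: sign_flip_matrix_mult_nth moment4_def mult_ac)
  finally show ?thesis using assms by simp
qed

lemma moment4_odd_cols_eq_0:
  assumes "flip_sign r b1 * flip_sign r b2 * flip_sign r b3 * flip_sign r b4 = -1"
  shows "moment4 a1 a2 a3 a4 b1 b2 b3 b4 = 0"
proof -
  let ?V = "\<lambda>U. U ** sign_flip_matrix r"
  have "moment4 a1 a2 a3 a4 b1 b2 b3 b4 =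
      (\<integral>U. ?V U$a1$b1 * ?V U$a2$b2 * ?V U$a3$b3 * ?V U$a4$b4 \<partial>M)"
    unfolding moment4_def
    by (rule integral_mult_right_invariant[symmetric, OF orthogonal_matrix_sign_flip_matrix]) measurable
  also have "\<dots> = (flip_sign r b1 * flip_sign r b2 * flip_sign r b3 * flip_sign r b4)
      * moment4 a1 a2 a3 a4 b1 b2 b3 b4"
    by (simp add: mult_sign_flip_matrix_nth moment4_def mult_ac)
  finally show ?thesis using assms by simp
qed

lemma moment2_perm_cols:
  assumes "\<sigma> permutes UNIV"
  shows "moment2 a1 a2 (\<sigma> b1) (\<sigma> b2) = moment2 a1 a2 b1 b2"
proof -
  let ?V = "\<lambda>U. U ** transpose (perm_matrix \<sigma>)"
  have "moment2 a1 a2 b1 b2 = (\<integral>U. ?V U$a1$b1 * ?V U$a2$b2 \<partial>M)"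
    unfolding moment2_def using orthogonal_matrix_perm_matrix[OF assms]
    by (intro integral_mult_right_invariant[symmetric]) auto
  then show ?thesis by (simp add: mult_transpose_perm_matrix_nth moment2_def)
qed

lemma moment4_perm_rows:
  assumes "\<sigma> permutes UNIV"
  shows "moment4 (\<sigma> a1) (\<sigma> a2) (\<sigma> a3) (\<sigma> a4) b1 b2 b3 b4 = moment4 a1 a2 a3 a4 b1 b2 b3 b4"
proof -
  let ?V = "\<lambda>U. perm_matrix \<sigma> ** U"
  have "moment4 a1 a2 a3 a4 b1 b2 b3 b4 =
      (\<integral>U. ?V U$a1$b1 * ?V U$a2$b2 * ?V U$a3$b3 * ?V U$a4$b4 \<partial>M)"
    unfolding moment4_def
    by (rule integral_mult_left_invariant[symmetric, OF orthogonal_matrix_perm_matrix[OF assms]])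
      measurable
  then show ?thesis by (simp add: perm_matrix_mult_nth moment4_def)
qed

lemma moment4_perm_cols:
  assumes "\<sigma> permutes UNIV"
  shows "moment4 a1 a2 a3 a4 (\<sigma> b1) (\<sigma> b2) (\<sigma> b3) (\<sigma> b4) = moment4 a1 a2 a3 a4 b1 b2 b3 b4"
proof -
  let ?V = "\<lambda>U. U ** transpose (perm_matrix \<sigma>)"
  have "moment4 a1 a2 a3 a4 b1 b2 b3 b4 =
      (\<integral>U. ?V U$a1$b1 * ?V U$a2$b2 * ?V U$a3$b3 * ?V U$a4$b4 \<partial>M)"
    unfolding moment4_def using orthogonal_matrix_perm_matrix[OF assms]
    by (intro integral_mult_right_invariant[symmetric]) auto
  then show ?thesis by (simp add: mult_transpose_perm_matrix_nth moment4_def)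
qed

lemma moment2_sum_row: "(\<Sum>j\<in>UNIV. moment2 i i' j j) = (if i = i' then 1 else 0)"
proof -
  have "(\<Sum>j\<in>UNIV. moment2 i i' j j) = (\<integral>U. (\<Sum>j\<in>UNIV. U$i$j * U$i'$j) \<partial>M)"
    by (simp add: moment2_def integrable_entry_product2)
  also have "\<dots> = (\<integral>U. (if i = i' then 1 else 0) \<partial>M)"
    using AE_orthogonal_matrix
    by (intro integral_cong_AE) (auto intro!: borel_measurable_M elim!: eventually_mono
        simp: orthogonal_matrix_rows_orthonormal)
  finally show ?thesis by (simp add: prob_space)
qed

lemma moment4_sum_row:
  "(\<Sum>j\<in>UNIV. moment4 a1 a2 i i' b1 b2 j j) = (if i = i' then moment2 a1 a2 b1 b2 else 0)"
proof -
  have "(\<Sum>j\<in>UNIV. moment4 a1 a2 i i' b1 b2 j j)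
      = (\<integral>U. (\<Sum>j\<in>UNIV. U$a1$b1 * U$a2$b2 * U$i$j * U$i'$j) \<partial>M)"
    by (simp add: moment4_def integrable_entry_product4)
  also have "\<dots> = (\<integral>U. (if i = i' then 1 else 0) * (U$a1$b1 * U$a2$b2) \<partial>M)"
    using AE_orthogonal_matrix
  proof (intro integral_cong_AE; (elim eventually_mono)?)
    fix U :: "real^'n^'n" assume "orthogonal_matrix U"
    then show "(\<Sum>j\<in>UNIV. U$a1$b1 * U$a2$b2 * U$i$j * U$i'$j) = (if i = i' then 1 else 0) * (U$a1$b1 * U$a2$b2)"
      using orthogonal_matrix_rows_orthonormal[of U i i'] by (simp add: mult.assoc flip: sum_distrib_left)
  qed (auto intro!: borel_measurable_M)
  finally show ?thesis by (simp add: moment2_def)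
qed

lemma moment4_sum_col:
  "(\<Sum>i\<in>UNIV. moment4 a1 a2 i i b1 b2 j j') = (if j = j' then moment2 a1 a2 b1 b2 else 0)"
proof -
  have "(\<Sum>i\<in>UNIV. moment4 a1 a2 i i b1 b2 j j')
      = (\<integral>U. (\<Sum>i\<in>UNIV. U$a1$b1 * U$a2$b2 * U$i$j * U$i$j') \<partial>M)"
    by (simp add: moment4_def integrable_entry_product4)
  also have "\<dots> = (\<integral>U. (if j = j' then 1 else 0) * (U$a1$b1 * U$a2$b2) \<partial>M)"
    using AE_orthogonal_matrix
  proof (intro integral_cong_AE; (elim eventually_mono)?)
    fix U :: "real^'n^'n" assume "orthogonal_matrix U"
    then show "(\<Sum>i\<in>UNIV. U$a1$b1 * U$a2$b2 * U$i$j * U$i$j') = (if j = j' then 1 else 0) * (U$a1$b1 * U$a2$b2)"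
      using orthogonal_matrix_cols_orthonormal[of U j j'] by (simp add: mult.assoc flip: sum_distrib_left)
  qed (auto intro!: borel_measurable_M)
  finally show ?thesis by (simp add: moment2_def)
qed

lemma fourth_power_mean:
  fixes c x y :: real
  assumes "c * c = 1/2"
  shows "(c*x + c*y) * (c*x + c*y) * (c*x + c*y) * (c*x + c*y) =
    1/4 * (x*x*x*x) + x*x*x*y + 3/2 * (x*x*y*y) + x*y*y*y + 1/4 * (y*y*y*y)"
proof -
  have "(c*x + c*y) * (c*x + c*y) * (c*x + c*y) * (c*x + c*y) = (c*c) * (c*c) * ((x+y)*(x+y)*(x+y)*(x+y))"
    by (simp add: algebra_simps)
  then show ?thesis unfolding assms by (simp add: algebra_simps)
qed

(* Rotating rows r and s by pi/4 expresses E U_rc^4 through mixed moments, of which only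
   E U_rc^2 U_sc^2 survives the sign symmetries. *)
lemma moment4_single_entry_eq_3_col_pair:
  assumes "r \<noteq> s"
  shows "moment4 r r r r c c c c = 3 * moment4 r r s s c c c c"
proof -
  let ?V = "\<lambda>U. plane_rotation (pi/4) r s ** U"
  have trig: "cos (pi/4) * cos (pi/4) = 1/2" "sin (pi/4) = cos (pi/4)"
    by (simp_all add: cos_45 sin_45)
  have "moment4 r r r r c c c c = (\<integral>U. ?V U$r$c * ?V U$r$c * ?V U$r$c * ?V U$r$c \<partial>M)"
    unfolding moment4_def
    by (rule integral_mult_left_invariant[symmetric, OF orthogonal_matrix_plane_rotation[OF assms]])
      measurable
  also have "\<dots> = 1/4 * moment4 r r r r c c c c + moment4 r r r s c c c c
      + 3/2 * moment4 r r s s c c c c + moment4 r s s s c c c c + 1/4 * moment4 s s s s c c c c"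
    by (simp add: plane_rotation_mult_nth[OF assms] trig fourth_power_mean moment4_def
        integrable_entry_product4)
  also have "moment4 r r r s c c c c = 0"
    by (rule moment4_odd_rows_eq_0[where r=s]) (use assms in \<open>simp add: flip_sign_def\<close>)
  also have "moment4 r s s s c c c c = 0"
    by (rule moment4_odd_rows_eq_0[where r=r]) (use assms in \<open>simp add: flip_sign_def\<close>)
  also have "moment4 s s s s c c c c = moment4 r r r r c c c c"
    using moment4_perm_rows[OF permutes_swap_id[of r UNIV s], of r r r r] by simp
  finally show ?thesis by simp
qed

end

lemma sum_eq_single_plus_rest:
  fixes f :: "'a::finite \<Rightarrow> real"
  assumes "\<And>j. j \<noteq> c \<Longrightarrow> f j = x"
  shows "(\<Sum>j\<in>UNIV. f j) = f c + (real CARD('a) - 1) * x"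
proof -
  have "(\<Sum>j\<in>UNIV. f j) = f c + (\<Sum>j\<in>UNIV - {c}. f j)"
    by (rule sum.remove) auto
  also have "(\<Sum>j\<in>UNIV - {c}. f j) = (\<Sum>j\<in>UNIV - {c}. x)"
    using assms by (intro sum.cong) auto
  finally show ?thesis by (simp add: card_Diff_singleton of_nat_diff)
qed

lemma solve_linear_recursion:
  fixes n x a b :: real
  assumes "n \<ge> 2" "a / (n * (n + 2)) + (n - 1) * x = b / n"
  shows "x = (b * (n + 2) - a) / (n * (n - 1) * (n + 2))"
proof -
  have "n * (n + 2) \<noteq> 0" "n * (n - 1) * (n + 2) \<noteq> 0" "n \<noteq> 0"
    using assms(1) by auto
  with assms(2) show ?thesis by (simp add: divide_simps) (simp add: algebra_simps)
qed

locale haar_measure_dim2 = haar_measure M for M :: "(real^'n^'n) measure" +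
  assumes card_ge_2: "CARD('n) \<ge> 2"
begin

lemma exists_other_index: obtains s :: 'n where "s \<noteq> r"
proof -
  have "card (UNIV - {r}) \<ge> 1"
    using card_ge_2 by (simp add: card_Diff_singleton)
  then have "UNIV - {r} \<noteq> {}" by (metis card.empty not_one_le_zero)
  then show ?thesis using that by auto
qed

lemma moment2_eq:
  "moment2 a1 a2 b1 b2 = (if a1 = a2 then if b1 = b2 then 1 / real CARD('n) else 0 else 0)"
proof -
  have diagonal: "moment2 r r c c = 1 / real CARD('n)" for r c
  proof -
    have "moment2 r r j j = moment2 r r c c" for j
      using moment2_perm_cols[OF permutes_swap_id[of c UNIV j], of r r c c] by simp
    then have "(\<Sum>j\<in>UNIV. moment2 r r j j) = (\<Sum>j\<in>(UNIV::'n set). moment2 r r c c)"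
      by (intro sum.cong) auto
    then show ?thesis using moment2_sum_row[of r r] card_ge_2 by (simp add: field_simps)
  qed
  show ?thesis
  proof (cases "a1 = a2 \<and> b1 = b2")
    case False
    then show ?thesis
      using moment2_odd_rows_eq_0[of a1 a1 a2] moment2_odd_cols_eq_0[of b1 b1 b2]
      by (auto simp: flip_sign_def)
  qed (use diagonal in auto)
qed

lemma moment4_col_pair:
  assumes "r \<noteq> s"
  shows "moment4 r r s s c c c c = 1 / (real CARD('n) * (real CARD('n) + 2))"
proof -
  have "moment4 r r i i c c c c = moment4 r r s s c c c c" if "i \<noteq> r" for i
    using moment4_perm_rows[OF permutes_swap_id[of s UNIV i], of r r s s] that assms
    by (simp add: swap_id_eq)
  then have "(\<Sum>i\<in>UNIV. moment4 r r i i c c c c)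
      = moment4 r r r r c c c c + (real CARD('n) - 1) * moment4 r r s s c c c c"
    by (rule sum_eq_single_plus_rest)
  then have "3 * moment4 r r s s c c c c + (real CARD('n) - 1) * moment4 r r s s c c c c = 1 / real CARD('n)"
    using moment4_sum_col[of r r c c c c] moment4_single_entry_eq_3_col_pair[OF assms]
    by (simp add: moment2_eq)
  then show ?thesis using card_ge_2 by (simp add: divide_simps) (simp add: algebra_simps)
qed

lemma moment4_single_entry: "moment4 r r r r c c c c = 3 / (real CARD('n) * (real CARD('n) + 2))"
proof -
  obtain s where "s \<noteq> r" by (rule exists_other_index)
  then show ?thesis
    using moment4_single_entry_eq_3_col_pair[of r s] moment4_col_pair[of r s] by simp
qed

lemma moment4_row_pair:
  assumes "c \<noteq> c'"
  shows "moment4 r r r r c c c' c' = 1 / (real CARD('n) * (real CARD('n) + 2))"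
proof -
  have "moment4 r r r r c c j j = moment4 r r r r c c c' c'" if "j \<noteq> c" for j
    using moment4_perm_cols[OF permutes_swap_id[of c' UNIV j], of r r r r c c c' c'] that assms
    by (simp add: swap_id_eq)
  then have "(\<Sum>j\<in>UNIV. moment4 r r r r c c j j)
      = moment4 r r r r c c c c + (real CARD('n) - 1) * moment4 r r r r c c c' c'"
    by (rule sum_eq_single_plus_rest)
  then have "3 / (real CARD('n) * (real CARD('n) + 2)) + (real CARD('n) - 1) * moment4 r r r r c c c' c' = 1 / real CARD('n)"
    using moment4_sum_row[of r r r r c c] moment4_single_entry by (simp add: moment2_eq)
  then have "moment4 r r r r c c c' c'
      = (1 * (real CARD('n) + 2) - 3) / (real CARD('n) * (real CARD('n) - 1) * (real CARD('n) + 2))"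
    using card_ge_2 by (intro solve_linear_recursion) auto
  then show ?thesis using card_ge_2 by (simp add: divide_simps)
qed

lemma moment4_two_pairs:
  assumes "r \<noteq> r'" "c \<noteq> c'"
  shows "moment4 r r r' r' c c c' c' = (real CARD('n) + 1) / (real CARD('n) * (real CARD('n) - 1) * (real CARD('n) + 2))"
proof -
  have "moment4 r r r' r' c c j j = moment4 r r r' r' c c c' c'" if "j \<noteq> c" for j
    using moment4_perm_cols[OF permutes_swap_id[of c' UNIV j], of r r r' r' c c c' c'] that assms
    by (simp add: swap_id_eq)
  then have "(\<Sum>j\<in>UNIV. moment4 r r r' r' c c j j)
      = moment4 r r r' r' c c c c + (real CARD('n) - 1) * moment4 r r r' r' c c c' c'"
    by (rule sum_eq_single_plus_rest)
  then have "1 / (real CARD('n) * (real CARD('n) + 2)) + (real CARD('n) - 1) * moment4 r r r' r' c c c' c' = 1 / real CARD('n)"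
    using moment4_sum_row[of r r r' r' c c] moment4_col_pair[OF assms(1)] by (simp add: moment2_eq)
  then show ?thesis using card_ge_2 by (simp add: divide_simps) (simp add: algebra_simps)
qed

lemma moment4_crossed:
  assumes "r \<noteq> r'" "c \<noteq> c'"
  shows "moment4 r r r' r' c c' c c' = -1 / (real CARD('n) * (real CARD('n) - 1) * (real CARD('n) + 2))"
proof -
  have "moment4 r r' r r' c c j j = moment4 r r' r r' c c c' c'" if "j \<noteq> c" for j
    using moment4_perm_cols[OF permutes_swap_id[of c' UNIV j], of r r' r r' c c c' c'] that assms
    by (simp add: swap_id_eq)
  then have "(\<Sum>j\<in>UNIV. moment4 r r' r r' c c j j)
      = moment4 r r' r r' c c c c + (real CARD('n) - 1) * moment4 r r' r r' c c c' c'"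
    by (rule sum_eq_single_plus_rest)
  moreover have "moment4 r r' r r' c c c c = moment4 r r r' r' c c c c"
    and "moment4 r r' r r' c c c' c' = moment4 r r r' r' c c' c c'"
    using moment4_swap23 by metis+
  ultimately have "1 / (real CARD('n) * (real CARD('n) + 2)) + (real CARD('n) - 1) * moment4 r r r' r' c c' c c' = 0"
    using moment4_sum_row[of r r' r r' c c] moment4_col_pair[OF assms(1)] assms(1) by simp
  then show ?thesis using card_ge_2 by (simp add: divide_simps) (simp add: algebra_simps)
qed

lemma moment4_parallel_pairs:
  "moment4 r r r' r' c c c' c' = weingarten4 (real CARD('n)) r r r' r' c c c' c'"
proof -
  have nz: "real CARD('n) * (real CARD('n) - 1) * (real CARD('n) + 2) \<noteq> 0"
    "real CARD('n) * (real CARD('n) + 2) \<noteq> 0"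
    using card_ge_2 by auto
  consider "r = r'" "c = c'" | "r = r'" "c \<noteq> c'" | "r \<noteq> r'" "c = c'" | "r \<noteq> r'" "c \<noteq> c'"
    by blast
  then show ?thesis
  proof cases
    case 1
    then show ?thesis using nz by (simp add: moment4_single_entry weingarten4_unfold divide_simps)
  next
    case 2
    then show ?thesis using nz by (simp add: moment4_row_pair weingarten4_unfold divide_simps)
  next
    case 3
    then show ?thesis using nz by (simp add: moment4_col_pair weingarten4_unfold divide_simps)
  next
    case 4
    then show ?thesis by (simp add: moment4_two_pairs weingarten4_unfold)
  qed
qed

lemma moment4_crossed_pairs:
  "moment4 r r r' r' c c' c c' = weingarten4 (real CARD('n)) r r r' r' c c' c c'"
proof (cases "c = c'")
  case True
  then show ?thesis using moment4_parallel_pairs by simp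
next
  case c: False
  show ?thesis
  proof (cases "r = r'")
    case True
    have "moment4 r r r r c c' c c' = moment4 r r r r c c c' c'"
      using moment4_swap23 by metis
    then show ?thesis
      using True c card_ge_2 moment4_row_pair[OF c, of r]
      by (simp add: weingarten4_unfold divide_simps)
  qed (use c in \<open>simp add: moment4_crossed weingarten4_unfold\<close>)
qed

lemma moment4_eq_weingarten4_paired_rows:
  "moment4 r r r' r' b1 b2 b3 b4 = weingarten4 (real CARD('n)) r r r' r' b1 b2 b3 b4"
proof (cases b1 b2 b3 b4 rule: index_quadruple_cases)
  case (1 s)
  then show ?thesis by (simp add: moment4_odd_cols_eq_0 weingarten4_odd_cols_eq_0)
next
  case 2
  then show ?thesis by (simp add: moment4_parallel_pairs)
next
  case 3
  then show ?thesis by (simp add: moment4_crossed_pairs)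
next
  case 4
  then show ?thesis
    using moment4_crossed_pairs[of r r' b1 b2]
    by (metis moment4_swap34 weingarten4_swap34)
qed

theorem moment4_eq_weingarten4:
  "moment4 a1 a2 a3 a4 b1 b2 b3 b4 = weingarten4 (real CARD('n)) a1 a2 a3 a4 b1 b2 b3 b4"
proof (cases a1 a2 a3 a4 rule: index_quadruple_cases)
  case (1 r)
  then show ?thesis by (simp add: moment4_odd_rows_eq_0 weingarten4_odd_rows_eq_0)
next
  case 2
  then show ?thesis by (simp add: moment4_eq_weingarten4_paired_rows)
next
  case 3
  then show ?thesis
    using moment4_eq_weingarten4_paired_rows[of a1 a2 b1 b3 b2 b4]
    by (metis moment4_swap23 weingarten4_swap23)
next
  case 4
  then show ?thesis
    using moment4_eq_weingarten4_paired_rows[of a1 a2 b1 b4 b2 b3]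
    by (metis moment4_swap23 moment4_swap34 weingarten4_swap23 weingarten4_swap34)
qed

end

section \<open>Mean and second moment of p2(AO)\<close>

definition frob_sq :: "real^'n^'n \<Rightarrow> real" where
  "frob_sq A = (\<Sum>i\<in>UNIV. \<Sum>j\<in>UNIV. A$i$j * A$i$j)"

definition gram_frob_sq :: "real^'n^'n \<Rightarrow> real" where
  "gram_frob_sq A = (\<Sum>i\<in>UNIV. \<Sum>k\<in>UNIV. (\<Sum>j\<in>UNIV. A$i$j * A$k$j)\<^sup>2)"

lemma frob_sq_eq_trace: "frob_sq A = trace (A ** transpose A)"
  by (simp add: frob_sq_def trace_def matrix_matrix_mult_def transpose_def)

lemma gram_frob_sq_ge: "gram_frob_sq (A::real^'n^'n) \<ge> (frob_sq A)\<^sup>2 / real CARD('n)"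
proof -
  define G where "G i k = (\<Sum>j\<in>UNIV. A$i$j * A$k$j)" for i k
  have "(frob_sq A)\<^sup>2 = (\<Sum>i\<in>UNIV. G i i)\<^sup>2"
    by (simp add: frob_sq_def G_def)
  also have "\<dots> \<le> real CARD('n) * (\<Sum>i\<in>UNIV. (G i i)\<^sup>2)"
    using sum_squared_le_sum_of_squares[of "\<lambda>i. G i i" UNIV] by (simp add: mult.commute)
  also have "(\<Sum>i\<in>UNIV. (G i i)\<^sup>2) \<le> gram_frob_sq A"
    unfolding gram_frob_sq_def G_def[symmetric] by (intro sum_mono member_le_sum) auto
  finally show ?thesis by (simp add: divide_le_eq mult.commute)
qed

lemma frob_sq_squared:
  "(frob_sq A)\<^sup>2 = (\<Sum>i\<in>UNIV. \<Sum>j\<in>UNIV. \<Sum>k\<in>UNIV. \<Sum>l\<in>UNIV. A$i$j * A$i$j * A$k$l * A$k$l)"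
proof -
  have "(frob_sq A)\<^sup>2 = (\<Sum>i\<in>UNIV. \<Sum>k\<in>UNIV. \<Sum>j\<in>UNIV. \<Sum>l\<in>UNIV. A$i$j * A$i$j * A$k$l * A$k$l)"
    by (simp add: frob_sq_def power2_eq_square sum_product mult_ac)
  also have "\<dots> = (\<Sum>i\<in>UNIV. \<Sum>j\<in>UNIV. \<Sum>k\<in>UNIV. \<Sum>l\<in>UNIV. A$i$j * A$i$j * A$k$l * A$k$l)"
    by (intro sum.cong refl sum.swap)
  finally show ?thesis .
qed

lemma gram_frob_sq_expand:
  "gram_frob_sq A = (\<Sum>i\<in>UNIV. \<Sum>j\<in>UNIV. \<Sum>k\<in>UNIV. \<Sum>l\<in>UNIV. A$i$j * A$k$j * A$i$l * A$k$l)"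
proof -
  have "gram_frob_sq A = (\<Sum>i\<in>UNIV. \<Sum>k\<in>UNIV. \<Sum>j\<in>UNIV. \<Sum>l\<in>UNIV. A$i$j * A$k$j * A$i$l * A$k$l)"
    by (simp add: gram_frob_sq_def power2_eq_square sum_product mult_ac)
  also have "\<dots> = (\<Sum>i\<in>UNIV. \<Sum>j\<in>UNIV. \<Sum>k\<in>UNIV. \<Sum>l\<in>UNIV. A$i$j * A$k$j * A$i$l * A$k$l)"
    by (intro sum.cong refl sum.swap)
  finally show ?thesis .
qed

lemma p2_mult_expansion:
  "p2 (A ** U) = (\<Sum>i\<in>UNIV. \<Sum>j\<in>UNIV. \<Sum>k\<in>UNIV. \<Sum>l\<in>UNIV. A$i$j * A$k$l * (U$j$k * U$l$i))"
proof -
  have "p2 (A ** U) = (\<Sum>i\<in>UNIV. \<Sum>k\<in>UNIV. \<Sum>l\<in>UNIV. \<Sum>j\<in>UNIV. A$i$j * A$k$l * (U$j$k * U$l$i))"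
    by (simp add: p2_def trace_def matrix_matrix_mult_def sum_product mult_ac)
  also have "\<dots> = (\<Sum>i\<in>UNIV. \<Sum>k\<in>UNIV. \<Sum>j\<in>UNIV. \<Sum>l\<in>UNIV. A$i$j * A$k$l * (U$j$k * U$l$i))"
    by (intro sum.cong refl sum.swap)
  also have "\<dots> = (\<Sum>i\<in>UNIV. \<Sum>j\<in>UNIV. \<Sum>k\<in>UNIV. \<Sum>l\<in>UNIV. A$i$j * A$k$l * (U$j$k * U$l$i))"
    by (intro sum.cong refl sum.swap)
  finally show ?thesis .
qed

definition contract4 :: "real^'n^'n \<Rightarrow> ('n \<Rightarrow> 'n \<Rightarrow> 'n \<Rightarrow> 'n \<Rightarrow> 'n \<Rightarrow> 'n \<Rightarrow> 'n \<Rightarrow> 'n \<Rightarrow> real) \<Rightarrow> real"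
  where "contract4 A g =
    (\<Sum>i\<in>UNIV. \<Sum>j\<in>UNIV. \<Sum>k\<in>UNIV. \<Sum>l\<in>UNIV. \<Sum>i'\<in>UNIV. \<Sum>j'\<in>UNIV. \<Sum>k'\<in>UNIV. \<Sum>l'\<in>UNIV.
       A$i$j * A$k$l * A$i'$j' * A$k'$l' * g j l j' l' k i k' i')"

lemma p2_mult_squared:
  "(p2 (A ** U))\<^sup>2 = contract4 A (\<lambda>a1 a2 a3 a4 b1 b2 b3 b4. U$a1$b1 * U$a2$b2 * U$a3$b3 * U$a4$b4)"
  unfolding power2_eq_square p2_mult_expansion contract4_def
  by (simp only: sum_distrib_right) (simp add: sum_distrib_left mult_ac)

lemma mult_if_zero_right: "(x::real) * (if P then y else 0) = (if P then x * y else 0)"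
  by simp

lemma mult_if_zero_left: "(if P then y else 0) * (x::real) = (if P then y * x else 0)"
  by simp

lemma sum_if_zero_const: "(\<Sum>x\<in>S. if P then f x else 0) = (if P then sum f S else (0::real))"
  by simp

lemma contract4_pairings:
  assumes "p < 3" "q < 3"
  shows "contract4 A (\<lambda>a1 a2 a3 a4 b1 b2 b3 b4. pairing p a1 a2 a3 a4 * pairing q b1 b2 b3 b4)
    = (if p = q then (frob_sq A)\<^sup>2 else gram_frob_sq A)"
proof -
  have "p \<in> {0, 1, 2}" "q \<in> {0, 1, 2}" using assms by auto
  (* Two of the off-diagonal contractions come out as |A^t A|^2, which is |A A^t|^2 after
     exchanging two summations. *)
  then show ?thesis
    by (auto simp: contract4_def pairing_def of_bool_def mult_if_zero_right mult_if_zero_left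
        sum_if_zero_const frob_sq_squared gram_frob_sq_expand mult_ac)
      (intro sum.cong refl sum.swap)+
qed

lemma contract4_add:
  "contract4 A (\<lambda>a1 a2 a3 a4 b1 b2 b3 b4. g a1 a2 a3 a4 b1 b2 b3 b4 + h a1 a2 a3 a4 b1 b2 b3 b4)
    = contract4 A g + contract4 A h"
  by (simp add: contract4_def distrib_left sum.distrib)

lemma contract4_scale:
  "contract4 A (\<lambda>a1 a2 a3 a4 b1 b2 b3 b4. c * g a1 a2 a3 a4 b1 b2 b3 b4) = c * contract4 A g"
  by (simp add: contract4_def sum_distrib_left mult_ac)

lemma contract4_sum:
  "contract4 A (\<lambda>a1 a2 a3 a4 b1 b2 b3 b4. \<Sum>x\<in>S. g x a1 a2 a3 a4 b1 b2 b3 b4)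
    = (\<Sum>x\<in>S. contract4 A (g x))"
proof (induction S rule: infinite_finite_induct)
  case (infinite S)
  then show ?case using contract4_scale[of A 0] by simp
next
  case empty
  then show ?case using contract4_scale[of A 0] by simp
next
  case (insert x S)
  then show ?case by (simp add: contract4_add)
qed

lemma contract4_weingarten4:
  fixes A :: "real^'n^'n"
  shows "contract4 A (weingarten4 n) =
    (3 * (n + 1) * (frob_sq A)\<^sup>2 - 6 * gram_frob_sq A) / (n * (n - 1) * (n + 2))"
proof -
  have "contract4 A (weingarten4 n) = contract4 A (\<lambda>a1 a2 a3 a4 b1 b2 b3 b4.
      \<Sum>p<3. \<Sum>q<3. weingarten_coeff n p q * (pairing p a1 a2 a3 a4 * pairing q b1 b2 b3 b4))"
    by (simp add: weingarten4_def[abs_def] mult.assoc)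
  also have "\<dots> =
      (\<Sum>p<3. \<Sum>q<3. weingarten_coeff n p q * (if p = q then (frob_sq A)\<^sup>2 else gram_frob_sq A))"
    by (simp add: contract4_sum contract4_scale contract4_pairings)
  finally show ?thesis
    by (simp add: numeral_3_eq_3 weingarten_coeff_def add_divide_distrib diff_divide_distrib
        algebra_simps)
qed

context haar_measure_dim2
begin

lemma integrable_p2_mult: "integrable M (\<lambda>U. p2 (A ** U))"
  by (simp add: p2_mult_expansion integrable_entry_product2)

lemma integrable_p2_mult_squared: "integrable M (\<lambda>U. (p2 (A ** U))\<^sup>2)"
  by (simp add: p2_mult_squared contract4_def integrable_entry_product4)

lemma integral_p2_mult: "(\<integral>U. p2 (A ** U) \<partial>M) = frob_sq A / real CARD('n)"
proof -
  have "(\<integral>U. p2 (A ** U) \<partial>M) =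
      (\<Sum>i\<in>UNIV. \<Sum>j\<in>UNIV. \<Sum>k\<in>UNIV. \<Sum>l\<in>UNIV. A$i$j * A$k$l * moment2 j l k i)"
    by (simp add: p2_mult_expansion integrable_entry_product2 moment2_def)
  also have "\<dots> = (\<Sum>i\<in>UNIV. \<Sum>j\<in>UNIV. A$i$j * A$i$j / real CARD('n))"
    by (simp add: moment2_eq mult_if_zero_right sum_if_zero_const)
  finally show ?thesis by (simp add: frob_sq_def sum_divide_distrib)
qed

lemma integral_p2_mult_squared:
  "(\<integral>U. (p2 (A ** U))\<^sup>2 \<partial>M) = contract4 A (weingarten4 (real CARD('n)))"
proof -
  have "(\<integral>U. (p2 (A ** U))\<^sup>2 \<partial>M) = contract4 A moment4"
    by (simp add: p2_mult_squared contract4_def integrable_entry_product4 moment4_def)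
  also have "moment4 = weingarten4 (real CARD('n))"
    by (intro ext) (rule moment4_eq_weingarten4)
  finally show ?thesis .
qed

end

theorem mainTheorem3:
  fixes A :: "real^'n^'n" and M :: "(real^'n^'n) measure"
  assumes "CARD('n) \<ge> 4"
    and "trace (A ** transpose A) = real CARD('n)"
    and "haar_orthogonal M"
  shows "prob_space.variance M (\<lambda>U. p2 (A ** U)) \<le> 2"
proof -
  interpret haar_measure_dim2 M
    using assms(1,3) by unfold_locales auto
  define n where "n = real CARD('n)"
  have n: "n \<ge> 2" using assms(1) by (simp add: n_def)
  have frob: "frob_sq A = n"
    using assms(2) by (simp add: frob_sq_eq_trace n_def)
  have gram: "gram_frob_sq A \<ge> n"
    using gram_frob_sq_ge[of A] frob n by (simp add: n_def power2_eq_square)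
  have "variance (\<lambda>U. p2 (A ** U)) = (\<integral>U. (p2 (A ** U))\<^sup>2 \<partial>M) - (\<integral>U. p2 (A ** U) \<partial>M)\<^sup>2"
    by (rule variance_eq[OF integrable_p2_mult integrable_p2_mult_squared])
  also have "\<dots> = (3 * (n + 1) * n\<^sup>2 - 6 * gram_frob_sq A) / (n * (n - 1) * (n + 2)) - 1"
    using n by (simp add: integral_p2_mult integral_p2_mult_squared contract4_weingarten4 frob n_def)
  also have "\<dots> \<le> 2"
  proof -
    have "3 * (n + 1) * n\<^sup>2 - 6 * gram_frob_sq A \<le> 3 * (n * (n - 1) * (n + 2))"
      using gram by (simp add: algebra_simps power2_eq_square)
    moreover have "n * (n - 1) * (n + 2) > 0" using n by simp
    ultimately show ?thesis by (simp add: divide_le_eq)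
  qed
  finally show ?thesis .
qed

end
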